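(* Let $(\hat q(k))_{k\ge1}$ be a sequence of positive numbers. (1) If for all $k$ large enough $$\hat q(k)\ge\frac{1}{1+\frac{1-p}{p}Q(k)}\Big(\sum_{i=1}^{\lfloor (k-1)/2\rfloor}q(i)\hat q(k-i)+\frac{1-p}{2p}q(k)^2+\mathbf 1_{\{k\text{ even}\}}\tfrac12 q(k/2)^2\Big),$$ then there is $C>0$ with $q(k)\le C\hat q(k)$ for all $k\ge1$. (2) If for all $k$ large enough $$\hat q(k)\le\frac{1}{1+\frac{1-p}{p}Q(k)}\sum_{i=1}^{\lfloor (k-1)/2\rfloor}q(i)\hat q(k-i),$$ then there is $c>0$ with $c\,\hat q(k)\le q(k)$ for all $k\ge1$.
   Context: A sign-decorated binary tree is a finite planar rooted tree in which every internal vertex (node) has exactly two ordered children and carries a sign $\oplus$ or $\ominus$; $\mathrm{LIS}(t)$ is the maximal number of leaves in a set of leaves whose pairwise highest common ancestors all carry $\oplus$. Fix $p\in(0,1)$. $T$ is a critical binary Bienaymé–Galton–Watson tree with i.i.d. node signs, $\mathbb P(\oplus)=p$; $q(k)=\mathbb P(\mathrm{LIS}(T)=k)>0$, $Q(k)=\mathbb P(\mathrm{LIS}(T)\ge k)$. These satisfy, for $k\ge2$, $q(k)=(1-p)q(k)\sum_{i=1}^{k-1}q(i)+p\sum_{i=1}^{\lfloor(k-1)/2\rfloor}q(i)q(k-i)+\frac{1-p}2q(k)^2+\mathbf 1_{\{k\text{ even}\}}\frac p2 q(k/2)^2$. *)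

theory Defs
  imports "HOL-Analysis.Analysis"
begin

text \<open>Sign-decorated finite planar binary trees. The Boolean at an internal
  node is its sign: True = plus, False = minus.\<close>
datatype stree = Leaf | Node bool stree stree

text \<open>Vertices are addressed by paths from the root (False = left child,
  True = right child).\<close>
fun subtree_at :: "stree \<Rightarrow> bool list \<Rightarrow> stree option" where
  "subtree_at t [] = Some t"
| "subtree_at Leaf (b # bs) = None"
| "subtree_at (Node s l r) (b # bs) = subtree_at (if b then r else l) bs"

definition leaves :: "stree \<Rightarrow> bool list set" where
  "leaves t = {u. subtree_at t u = Some Leaf}"

definition sign_at :: "stree \<Rightarrow> bool list \<Rightarrow> bool" where
  "sign_at t u = (case subtree_at t u of Some (Node s _ _) \<Rightarrow> s | _ \<Rightarrow> False)"

text \<open>Highest common ancestor of two vertices = longest common prefix of their paths.\<close>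
fun hca :: "bool list \<Rightarrow> bool list \<Rightarrow> bool list" where
  "hca (x # xs) (y # ys) = (if x = y then x # hca xs ys else [])"
| "hca _ _ = []"

definition LIS :: "stree \<Rightarrow> nat" where
  "LIS t = Max {card S | S. S \<subseteq> leaves t \<and>
             (\<forall>u\<in>S. \<forall>v\<in>S. u \<noteq> v \<longrightarrow> sign_at t (hca u v))}"

text \<open>Law of the critical binary BGW tree (0 or 2 children w.p. 1/2 each)
  with i.i.d. signs, P(plus) = p: probability of a given finite tree.\<close>
fun bgw_prob :: "real \<Rightarrow> stree \<Rightarrow> real" where
  "bgw_prob p Leaf = 1/2"
| "bgw_prob p (Node s l r) = 1/2 * (if s then p else 1 - p) * bgw_prob p l * bgw_prob p r"

definition q :: "real \<Rightarrow> nat \<Rightarrow> real" where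
  "q p k = infsum (bgw_prob p) {t. LIS t = k}"

definition Q :: "real \<Rightarrow> nat \<Rightarrow> real" where
  "Q p k = infsum (bgw_prob p) {t. LIS t \<ge> k}"

end

theory Submission
  imports Defs
begin

text \<open>At a \<oplus> root the LIS values of the two subtrees add up, at a \<ominus> root one takes their maximum.
  Splitting the law of \<open>T\<close> at the root therefore turns \<open>q\<close> into a fixed point
  \<open>q(k) = a(k) (\<Sum>\<^sub>i q(i) q(k-i) + b(k))\<close> of a recursion with nonnegative coefficients in
  which the right-hand side only involves indices smaller than \<open>k\<close>. For such recursions a
  comparison principle holds: a subsolution is bounded by a constant multiple of any positive
  supersolution, the constant being chosen on the finitely many indices where the inequalities
  are not assumed. Part (1) compares \<open>q\<close> with the supersolution \<open>qh\<close>; part (2) drops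
  the nonnegative term \<open>b\<close> and compares the subsolution \<open>qh\<close> with the supersolution \<open>q\<close>.\<close>

lemma dominated_by_supersolution:
  fixes u v a b w :: "nat \<Rightarrow> real" and I :: "nat \<Rightarrow> nat set"
  assumes v_pos: "\<And>k. k \<ge> 1 \<Longrightarrow> v k > 0"
    and a_nonneg: "\<And>k. a k \<ge> 0" and b_nonneg: "\<And>k. b k \<ge> 0" and w_nonneg: "\<And>i. w i \<ge> 0"
    and I_range: "\<And>k i. i \<in> I k \<Longrightarrow> 0 < i \<and> i < k"
    and sub: "\<And>k. k \<ge> K \<Longrightarrow> u k \<le> a k * ((\<Sum>i\<in>I k. w i * u (k - i)) + b k)"
    and super: "\<And>k. k \<ge> K \<Longrightarrow> a k * ((\<Sum>i\<in>I k. w i * v (k - i)) + b k) \<le> v k"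
  shows "\<exists>C>0. \<forall>k\<ge>1. u k \<le> C * v k"
proof -
  define C where "C = 1 + (\<Sum>k = 1..<K. \<bar>u k\<bar> / v k)"
  have C_ge_1: "C \<ge> 1"
    unfolding C_def using v_pos by (auto intro!: sum_nonneg divide_nonneg_pos)
  have "u k \<le> C * v k" if "k \<ge> 1" for k
    using that
  proof (induction k rule: less_induct)
    case (less k)
    show ?case
    proof (cases "k < K")
      case True
      have "\<bar>u k\<bar> / v k \<le> (\<Sum>k = 1..<K. \<bar>u k\<bar> / v k)"
        using True less.prems v_pos by (intro member_le_sum) (auto intro: divide_nonneg_pos)
      then have "\<bar>u k\<bar> / v k \<le> C" by (simp add: C_def)
      then show ?thesis using v_pos[OF less.prems] by (simp add: divide_le_eq)
    next
      case False
      have IH: "u (k - i) \<le> C * v (k - i)" if "i \<in> I k" for i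
        using I_range[OF that] by (intro less.IH) auto
      have "u k \<le> a k * ((\<Sum>i\<in>I k. w i * u (k - i)) + b k)"
        using False by (intro sub) simp
      also have "\<dots> \<le> a k * ((\<Sum>i\<in>I k. w i * (C * v (k - i))) + C * b k)"
        using IH C_ge_1 a_nonneg w_nonneg b_nonneg[of k]
        by (intro mult_left_mono add_mono sum_mono) (auto simp: mult_le_cancel_right1)
      also have "\<dots> = C * (a k * ((\<Sum>i\<in>I k. w i * v (k - i)) + b k))"
        by (simp add: sum_distrib_left algebra_simps)
      also have "\<dots> \<le> C * v k"
        using False C_ge_1 by (intro mult_left_mono super) auto
      finally show ?thesis .
    qed
  qed
  then show ?thesis using C_ge_1 by (intro exI[of _ C]) auto
qed

lemma self_convolution_split:
  fixes f :: "nat \<Rightarrow> 'a::comm_semiring_1"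
  assumes "f 0 = 0" and "k \<ge> 1"
  shows "(\<Sum>i = 0..k. f i * f (k - i)) =
    2 * (\<Sum>i = 1..(k - 1) div 2. f i * f (k - i)) + (if even k then f (k div 2) ^ 2 else 0)"
proof -
  define g where "g i = f i * f (k - i)" for i
  define L where "L = {i \<in> {0..k}. 2 * i < k}"
  define R where "R = {i \<in> {0..k}. 2 * i > k}"
  define M where "M = {i \<in> {0..k}. 2 * i = k}"
  have "{0..k} = L \<union> R \<union> M" and "L \<inter> R = {}" and "(L \<union> R) \<inter> M = {}"
    and "finite L" and "finite R" and "finite M"
    by (auto simp: L_def R_def M_def)
  then have "sum g {0..k} = sum g L + sum g R + sum g M"
    by (simp add: sum.union_disjoint)
  also have "sum g R = sum g L"
    by (rule sum.reindex_bij_witness[of _ "\<lambda>i. k - i" "\<lambda>i. k - i"])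
      (auto simp: L_def R_def g_def mult.commute)
  also have "sum g L = (\<Sum>i = 1..(k - 1) div 2. g i)"
  proof -
    have "L = {0..(k - 1) div 2}" unfolding L_def using assms(2) by auto
    then show ?thesis by (simp add: sum.atLeast_Suc_atMost g_def assms(1))
  qed
  also have "sum g M = (if even k then f (k div 2) ^ 2 else 0)"
  proof (cases "even k")
    case True
    then have "M = {k div 2}" and "k - k div 2 = k div 2" by (auto simp: M_def)
    then show ?thesis using True by (simp add: g_def power2_eq_square)
  next
    case False
    then have "M = {}" by (auto simp: M_def)
    then show ?thesis using False by simp
  qed
  finally show ?thesis by (simp add: g_def mult_2)
qed

definition plus_set :: "stree \<Rightarrow> bool list set \<Rightarrow> bool" where
  "plus_set t S \<longleftrightarrow> S \<subseteq> leaves t \<and> (\<forall>u\<in>S. \<forall>v\<in>S. u \<noteq> v \<longrightarrow> sign_at t (hca u v))"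

lemma leaves_Leaf [simp]: "leaves Leaf = {[]}"
  by (auto simp: leaves_def elim: subtree_at.elims)

lemma leaves_Node: "leaves (Node s l r) = (#) False ` leaves l \<union> (#) True ` leaves r"
proof -
  have "subtree_at (Node s l r) u = Some Leaf \<longleftrightarrow>
      (\<exists>v. u = False # v \<and> subtree_at l v = Some Leaf) \<or> (\<exists>v. u = True # v \<and> subtree_at r v = Some Leaf)"
    for u by (cases u) auto
  then show ?thesis unfolding leaves_def by auto
qed

lemma finite_leaves [simp]: "finite (leaves t)"
  by (induction t) (auto simp: leaves_Node)

lemma sign_at_Node [simp]:
  "sign_at (Node s l r) [] = s"
  "sign_at (Node s l r) (b # u) = sign_at (if b then r else l) u"
  by (simp_all add: sign_at_def)

lemma plus_set_finite: "plus_set t S \<Longrightarrow> finite S"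
  unfolding plus_set_def by (auto intro: finite_subset)

lemma finite_plus_set_cards: "finite {card S | S. plus_set t S}"
  by (rule finite_subset[of _ "card ` Pow (leaves t)"]) (auto simp: plus_set_def)

lemma card_le_LIS: "plus_set t S \<Longrightarrow> card S \<le> LIS t"
  unfolding LIS_def plus_set_def[symmetric] using finite_plus_set_cards by (intro Max_ge) auto

lemma LIS_attained: "\<exists>S. plus_set t S \<and> card S = LIS t"
proof -
  have "plus_set t {}" by (simp add: plus_set_def)
  with finite_plus_set_cards have "LIS t \<in> {card S | S. plus_set t S}"
    unfolding LIS_def plus_set_def[symmetric] by (intro Max_in) auto
  then show ?thesis by auto
qed

lemma plus_set_Node_iff:
  "plus_set (Node s l r) ((#) False ` A \<union> (#) True ` B) \<longleftrightarrow>
     plus_set l A \<and> plus_set r B \<and> (s \<or> A = {} \<or> B = {})"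
proof -
  have "((#) False ` A \<union> (#) True ` B \<subseteq> leaves (Node s l r)) \<longleftrightarrow> A \<subseteq> leaves l \<and> B \<subseteq> leaves r"
    unfolding leaves_Node by auto
  moreover have "(\<forall>x\<in>(#) False ` A \<union> (#) True ` B. \<forall>y\<in>(#) False ` A \<union> (#) True ` B.
        x \<noteq> y \<longrightarrow> sign_at (Node s l r) (hca x y)) \<longleftrightarrow>
      (\<forall>u\<in>A. \<forall>v\<in>A. u \<noteq> v \<longrightarrow> sign_at l (hca u v)) \<and>
      (\<forall>u\<in>B. \<forall>v\<in>B. u \<noteq> v \<longrightarrow> sign_at r (hca u v)) \<and> (s \<or> A = {} \<or> B = {})"
    by (simp add: ball_Un) auto
  ultimately show ?thesis unfolding plus_set_def by argo
qed

lemma plus_set_Node_split: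
  assumes "plus_set (Node s l r) S"
  shows "S = (#) False ` {u. False # u \<in> S} \<union> (#) True ` {u. True # u \<in> S}"
proof (intro equalityI subsetI)
  fix x assume "x \<in> S"
  then obtain b u where "x = b # u"
    using assms unfolding plus_set_def leaves_Node by blast
  with \<open>x \<in> S\<close> show "x \<in> (#) False ` {u. False # u \<in> S} \<union> (#) True ` {u. True # u \<in> S}"
    by (cases b) auto
qed auto

lemma card_Cons_images:
  assumes "finite A" and "finite B"
  shows "card ((#) False ` A \<union> (#) True ` B) = card A + card B"
  using assms by (subst card_Un_disjoint) (auto simp: card_image)

lemma LIS_Node: "LIS (Node s l r) = (if s then LIS l + LIS r else max (LIS l) (LIS r))"
proof (rule antisym)
  obtain S where S: "plus_set (Node s l r) S" "card S = LIS (Node s l r)"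
    using LIS_attained by blast
  define A where "A = {u. False # u \<in> S}"
  define B where "B = {u. True # u \<in> S}"
  have split: "S = (#) False ` A \<union> (#) True ` B"
    unfolding A_def B_def using S(1) by (rule plus_set_Node_split)
  then have "plus_set l A" "plus_set r B" "s \<or> A = {} \<or> B = {}"
    using S(1) plus_set_Node_iff by auto
  moreover from this have "card S = card A + card B"
    unfolding split by (intro card_Cons_images plus_set_finite)
  ultimately show "LIS (Node s l r) \<le> (if s then LIS l + LIS r else max (LIS l) (LIS r))"
    using S(2) card_le_LIS[of l A] card_le_LIS[of r B] by auto
next
  obtain A where A: "plus_set l A" "card A = LIS l" using LIS_attained by blast
  obtain B where B: "plus_set r B" "card B = LIS r" using LIS_attained by blast
  have empty: "plus_set t {}" for t by (simp add: plus_set_def)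
  have "card A' + card B' \<le> LIS (Node s l r)"
    if "plus_set l A'" "plus_set r B'" "s \<or> A' = {} \<or> B' = {}" for A' B'
  proof -
    have "plus_set (Node s l r) ((#) False ` A' \<union> (#) True ` B')"
      using that plus_set_Node_iff by blast
    then show ?thesis
      using card_le_LIS card_Cons_images[OF plus_set_finite plus_set_finite] that by metis
  qed
  from this[OF A(1) B(1)] this[OF A(1) empty] this[OF empty B(1)]
  show "(if s then LIS l + LIS r else max (LIS l) (LIS r)) \<le> LIS (Node s l r)"
    using A(2) B(2) by auto
qed

lemma LIS_Leaf [simp]: "LIS Leaf = 1"
proof (rule antisym)
  obtain S where "plus_set Leaf S" "card S = LIS Leaf" using LIS_attained by blast
  then show "LIS Leaf \<le> 1"
    using card_mono[of "{[]}" S] by (auto simp: plus_set_def)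
  show "1 \<le> LIS Leaf"
    using card_le_LIS[of Leaf "{[]}"] by (simp add: plus_set_def)
qed

lemma LIS_pos: "LIS t \<ge> 1"
  by (induction t) (auto simp: LIS_Node)

fun plus_comb :: "nat \<Rightarrow> stree" where
  "plus_comb 0 = Leaf"
| "plus_comb (Suc n) = Node True Leaf (plus_comb n)"

lemma LIS_plus_comb: "LIS (plus_comb n) = Suc n"
  by (induction n) (auto simp: LIS_Node)

lemma Node_True_preimage_LIS_eq:
  "case_prod (Node True) -` {t. LIS t = k} = (\<Union>i\<in>{0..k}. {t. LIS t = i} \<times> {t. LIS t = k - i})"
  by (auto simp: LIS_Node)

lemma Node_False_preimage_LIS_eq:
  "case_prod (Node False) -` {t. LIS t = k} =
     {t. LIS t = k} \<times> {t. LIS t < k} \<union> {t. LIS t < k} \<times> {t. LIS t = k} \<union> {t. LIS t = k} \<times> {t. LIS t = k}"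
  by (auto simp: LIS_Node max_def split: if_splits)

definition pair_prob :: "real \<Rightarrow> stree \<times> stree \<Rightarrow> real" where
  "pair_prob p = (\<lambda>(l, r). bgw_prob p l * bgw_prob p r)"

lemma pair_prob_Pair [simp]: "pair_prob p (l, r) = bgw_prob p l * bgw_prob p r"
  by (simp add: pair_prob_def)

lemma size_eq_0_iff: "size t = 0 \<longleftrightarrow> t = Leaf"
  by (cases t) auto

lemma inj_Node: "inj (case_prod (Node s))"
  by (auto intro: injI)

lemma bgw_prob_Node: "bgw_prob p \<circ> case_prod (Node s) = (\<lambda>x. 1/2 * (if s then p else 1 - p) * pair_prob p x)"
  by (auto simp: pair_prob_def)

lemma size_le_Suc_subset:
  "{t. size t \<le> Suc n} \<subseteq> insert Leaf (\<Union>s. case_prod (Node s) ` ({t. size t \<le> n} \<times> {t. size t \<le> n}))"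
proof
  fix t :: stree assume t: "t \<in> {t. size t \<le> Suc n}"
  show "t \<in> insert Leaf (\<Union>s. case_prod (Node s) ` ({t. size t \<le> n} \<times> {t. size t \<le> n}))"
  proof (cases t)
    case (Node s l r)
    then have "t \<in> case_prod (Node s) ` ({t. size t \<le> n} \<times> {t. size t \<le> n})"
      using t by (auto intro: image_eqI[where x = "(l, r)"])
    then show ?thesis by blast
  qed simp
qed

lemma finite_size_le: "finite {t :: stree. size t \<le> n}"
proof (induction n)
  case 0
  then show ?case by (simp add: size_eq_0_iff)
next
  case (Suc n)
  then show ?case by (intro finite_subset[OF size_le_Suc_subset]) simp
qed

lemma sum_pair_prob_Times: "sum (pair_prob p) (X \<times> Y) = sum (bgw_prob p) X * sum (bgw_prob p) Y"
  by (simp add: pair_prob_def sum_product sum.cartesian_product)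

lemma sum_bgw_prob_image_Node:
  "sum (bgw_prob p) (case_prod (Node s) ` X) = 1/2 * (if s then p else 1 - p) * sum (pair_prob p) X"
  by (simp only: sum.reindex[OF inj_on_subset[OF inj_Node subset_UNIV]] bgw_prob_Node sum_distrib_left)

lemma bgw_prob_pos: "0 < p \<Longrightarrow> p < 1 \<Longrightarrow> bgw_prob p t > 0"
  by (induction t) auto

lemma q_0: "q p 0 = 0"
proof -
  have "LIS t \<noteq> 0" for t
    using LIS_pos[of t] by simp
  then have no_tree: "{t. LIS t = 0} = {}" by simp
  show ?thesis unfolding q_def no_tree by simp
qed

context
  fixes p :: real
  assumes p_nonneg: "0 \<le> p" and p_le_1: "p \<le> 1"
begin

lemma bgw_prob_nonneg: "bgw_prob p t \<ge> 0"
  using p_nonneg p_le_1 by (induction t) auto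

lemma sum_bgw_prob_size_le: "sum (bgw_prob p) {t. size t \<le> n} \<le> 1"
proof (induction n)
  case 0
  then show ?case by (simp add: size_eq_0_iff)
next
  case (Suc n)
  define T where "T = {t :: stree. size t \<le> n}"
  have sum_Node: "sum (bgw_prob p) (case_prod (Node s) ` (T \<times> T)) =
      1/2 * (if s then p else 1 - p) * sum (bgw_prob p) T ^ 2" for s
    by (simp add: sum_bgw_prob_image_Node sum_pair_prob_Times power2_eq_square)
  have "{t. size t \<le> Suc n} \<subseteq> insert Leaf (case_prod (Node True) ` (T \<times> T) \<union> case_prod (Node False) ` (T \<times> T))"
    using size_le_Suc_subset[of n] by (auto simp: T_def UNIV_bool)
  then have "sum (bgw_prob p) {t. size t \<le> Suc n} \<le>
      sum (bgw_prob p) (insert Leaf (case_prod (Node True) ` (T \<times> T) \<union> case_prod (Node False) ` (T \<times> T)))"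
    using finite_size_le by (intro sum_mono2 bgw_prob_nonneg) (auto simp: T_def)
  also have "\<dots> = 1/2 + 1/2 * sum (bgw_prob p) T ^ 2"
  proof -
    have "finite T" by (simp add: T_def finite_size_le)
    moreover have "case_prod (Node True) ` (T \<times> T) \<inter> case_prod (Node False) ` (T \<times> T) = {}"
      and "Leaf \<notin> case_prod (Node True) ` (T \<times> T) \<union> case_prod (Node False) ` (T \<times> T)"
      by auto
    ultimately show ?thesis by (simp add: sum.union_disjoint sum_Node field_simps)
  qed
  also have "\<dots> \<le> 1"
  proof -
    have "sum (bgw_prob p) T ^ 2 \<le> 1"
      using Suc.IH bgw_prob_nonneg by (intro power_le_one sum_nonneg) (auto simp: T_def)
    then show ?thesis by simp
  qed
  finally show ?case .
qed

lemma summable_bgw_prob: "bgw_prob p summable_on A"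
proof -
  have "bgw_prob p summable_on UNIV"
  proof (rule nonneg_bdd_above_summable_on)
    show "bdd_above (sum (bgw_prob p) ` {F. F \<subseteq> UNIV \<and> finite F})"
    proof (rule bdd_aboveI2)
      fix F :: "stree set" assume "F \<in> {F. F \<subseteq> UNIV \<and> finite F}"
      then have "F \<subseteq> {t. size t \<le> (\<Sum>t\<in>F. size t)}"
        by (auto intro: member_le_sum)
      then have "sum (bgw_prob p) F \<le> sum (bgw_prob p) {t. size t \<le> (\<Sum>t\<in>F. size t)}"
        using finite_size_le by (intro sum_mono2 bgw_prob_nonneg)
      also have "\<dots> \<le> 1" by (rule sum_bgw_prob_size_le)
      finally show "sum (bgw_prob p) F \<le> 1" .
    qed
  qed (simp add: bgw_prob_nonneg)
  then show ?thesis by (rule summable_on_subset) simp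
qed

lemma summable_pair_prob: "pair_prob p summable_on A"
proof -
  have "pair_prob p summable_on UNIV \<times> UNIV"
    by (rule summable_on_SigmaI[where g = "\<lambda>l. bgw_prob p l * infsum (bgw_prob p) UNIV"])
      (auto simp: bgw_prob_nonneg summable_bgw_prob summable_on_cmult_left intro: has_sum_cmult_right)
  then show ?thesis by (rule summable_on_subset) simp
qed

lemma infsum_pair_prob_Times:
  "infsum (pair_prob p) (X \<times> Y) = infsum (bgw_prob p) X * infsum (bgw_prob p) Y"
proof -
  have "infsum (pair_prob p) (X \<times> Y) = infsum (\<lambda>l. infsum (\<lambda>r. pair_prob p (l, r)) Y) X"
    by (rule infsum_Sigma_banach[symmetric]) (rule summable_pair_prob)
  then show ?thesis by (simp add: infsum_cmult_right' infsum_cmult_left')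
qed

lemma infsum_bgw_prob_image_Node:
  "infsum (bgw_prob p) (case_prod (Node s) ` X) = 1/2 * (if s then p else 1 - p) * infsum (pair_prob p) X"
  by (simp only: infsum_reindex[OF inj_on_subset[OF inj_Node subset_UNIV]] bgw_prob_Node infsum_cmult_right')

lemma infsum_bgw_prob_root_split:
  "infsum (bgw_prob p) A = (if Leaf \<in> A then 1/2 else 0)
     + p/2 * infsum (pair_prob p) (case_prod (Node True) -` A)
     + (1 - p)/2 * infsum (pair_prob p) (case_prod (Node False) -` A)"
proof -
  let ?N = "\<lambda>s. case_prod (Node s) ` (case_prod (Node s) -` A)"
  have "A = (A \<inter> {Leaf}) \<union> ?N True \<union> ?N False"
  proof (intro equalityI subsetI)
    fix t assume "t \<in> A"
    then show "t \<in> (A \<inter> {Leaf}) \<union> ?N True \<union> ?N False"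
    proof (cases t)
      case (Node s l r)
      with \<open>t \<in> A\<close> show ?thesis by (cases s) (auto intro: image_eqI[where x = "(l, r)"])
    qed simp
  qed auto
  then have "infsum (bgw_prob p) A = infsum (bgw_prob p) ((A \<inter> {Leaf}) \<union> ?N True \<union> ?N False)"
    by (rule arg_cong)
  also have "\<dots> = infsum (bgw_prob p) (A \<inter> {Leaf}) + infsum (bgw_prob p) (?N True)
      + infsum (bgw_prob p) (?N False)"
    by (subst infsum_Un_disjoint, simp_all add: summable_bgw_prob summable_on_Un_disjoint, auto)+
  also have "infsum (bgw_prob p) (A \<inter> {Leaf}) = (if Leaf \<in> A then 1/2 else 0)"
    by auto
  finally show ?thesis by (simp only: infsum_bgw_prob_image_Node) simp
qed

lemma infsum_bgw_prob_UNIV: "infsum (bgw_prob p) UNIV = 1"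
proof -
  define T where "T = infsum (bgw_prob p) UNIV"
  have "T = 1/2 + p/2 * T^2 + (1 - p)/2 * T^2"
    using infsum_bgw_prob_root_split[of UNIV] infsum_pair_prob_Times[of UNIV UNIV]
    by (simp add: T_def power2_eq_square)
  also have "\<dots> = 1/2 + T^2/2" by (simp add: field_simps)
  finally have "(T - 1)^2 = 0" by (simp add: power2_diff)
  then show ?thesis by (simp add: T_def)
qed

lemma q_nonneg: "q p k \<ge> 0"
  unfolding q_def by (intro infsum_nonneg bgw_prob_nonneg)

lemma Q_nonneg: "Q p k \<ge> 0"
  unfolding Q_def by (intro infsum_nonneg bgw_prob_nonneg)

lemma infsum_bgw_prob_LIS_less: "infsum (bgw_prob p) {t. LIS t < k} = 1 - Q p k"
proof -
  have "infsum (bgw_prob p) {t. LIS t < k} + Q p k = infsum (bgw_prob p) ({t. LIS t < k} \<union> {t. LIS t \<ge> k})"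
    unfolding Q_def by (intro infsum_Un_disjoint[symmetric] summable_bgw_prob) auto
  also have "{t. LIS t < k} \<union> {t. LIS t \<ge> k} = UNIV"
    by auto
  also have "infsum (bgw_prob p) UNIV = 1"
    by (rule infsum_bgw_prob_UNIV)
  finally show ?thesis by simp
qed

lemma q_convolution_recursion:
  assumes "k \<ge> 2"
  shows "q p k = p/2 * (\<Sum>i = 0..k. q p i * q p (k - i)) + (1 - p)/2 * (2 * q p k * (1 - Q p k) + q p k ^ 2)"
proof -
  let ?m = "infsum (pair_prob p)"
  have "?m (case_prod (Node True) -` {t. LIS t = k}) = (\<Sum>i = 0..k. q p i * q p (k - i))"
    unfolding Node_True_preimage_LIS_eq
    by (subst sum_infsum[symmetric]) (auto simp: summable_pair_prob infsum_pair_prob_Times q_def)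
  moreover have "?m (case_prod (Node False) -` {t. LIS t = k}) = 2 * q p k * (1 - Q p k) + q p k ^ 2"
    unfolding Node_False_preimage_LIS_eq
    by (subst infsum_Un_disjoint, simp_all add: summable_pair_prob summable_on_Un_disjoint, auto)+
      (simp add: infsum_pair_prob_Times infsum_bgw_prob_LIS_less q_def[symmetric] power2_eq_square)
  moreover have "Leaf \<notin> {t. LIS t = k}" using assms by simp
  ultimately show ?thesis
    using infsum_bgw_prob_root_split[of "{t. LIS t = k}"] by (simp add: q_def)
qed

end

lemma q_pos:
  assumes "0 < p" and "p < 1" and "k \<ge> 1"
  shows "q p k > 0"
proof -
  have "bgw_prob p (plus_comb (k - 1)) \<le> q p k"
    unfolding q_def using assms LIS_plus_comb[of "k - 1"]
    by (intro infsum_mono_neutral[where A = "{plus_comb (k - 1)}", simplified])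
      (auto simp: summable_bgw_prob bgw_prob_nonneg)
  with bgw_prob_pos[OF assms(1,2)] show ?thesis by (rule less_le_trans)
qed

lemma q_fixed_point:
  assumes "0 < p" and "p < 1" and "k \<ge> 2"
  shows "q p k = 1 / (1 + (1 - p) / p * Q p k) *
    ((\<Sum>i = 1..(k - 1) div 2. q p i * q p (k - i))
     + (1 - p) / (2 * p) * (q p k)^2
     + (if even k then 1/2 * (q p (k div 2))^2 else 0))"
proof -
  define S where "S = (\<Sum>i = 1..(k - 1) div 2. q p i * q p (k - i))"
  define E where "E = (if even k then q p (k div 2) ^ 2 else 0)"
  have "(\<Sum>i = 0..k. q p i * q p (k - i)) = 2 * S + E"
    unfolding S_def E_def using assms by (intro self_convolution_split q_0) auto
  then have rec: "q p k = p/2 * (2 * S + E) + (1 - p)/2 * (2 * q p k * (1 - Q p k) + q p k ^ 2)"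
    using q_convolution_recursion[of p k] assms by simp
  have "q p k * (1 + (1 - p) / p * Q p k) = (p * q p k + (1 - p) * Q p k * q p k) / p"
    using assms(1) by (simp add: field_simps)
  also have "p * q p k + (1 - p) * Q p k * q p k = p * S + p * E / 2 + (1 - p) / 2 * q p k ^ 2"
    using rec by algebra
  also have "(p * S + p * E / 2 + (1 - p) / 2 * q p k ^ 2) / p = S + (1 - p) / (2 * p) * q p k ^ 2 + E / 2"
    using assms(1) by (simp add: field_simps)
  finally have "q p k * (1 + (1 - p) / p * Q p k) = S + (1 - p) / (2 * p) * q p k ^ 2 + E / 2" .
  moreover have "1 + (1 - p) / p * Q p k > 0"
    using assms Q_nonneg[of p k] by (simp add: add_pos_nonneg)
  moreover have "E / 2 = (if even k then 1/2 * (q p (k div 2))^2 else 0)"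
    by (simp add: E_def)
  ultimately show ?thesis
    unfolding S_def by (simp add: field_simps)
qed

lemma q_dominated_by_supersolution:
  assumes "0 < p" and "p < 1" and v_pos: "\<And>k. k \<ge> 1 \<Longrightarrow> v k > 0"
    and super: "\<forall>k\<ge>K. v k \<ge> 1 / (1 + (1 - p) / p * Q p k) *
      ((\<Sum>i = 1..(k - 1) div 2. q p i * v (k - i))
       + (1 - p) / (2 * p) * (q p k)^2
       + (if even k then 1/2 * (q p (k div 2))^2 else 0))"
  shows "\<exists>C>0. \<forall>k\<ge>1. q p k \<le> C * v k"
proof -
  define a where "a k = 1 / (1 + (1 - p) / p * Q p k)" for k
  define b where "b k = (1 - p) / (2 * p) * (q p k)^2 + (if even k then 1/2 * (q p (k div 2))^2 else 0)" for k
  define I where "I k = {1..(k - 1) div 2}" for k :: nat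
  have "a k \<ge> 0" and "b k \<ge> 0" and "q p k \<ge> 0" for k
    using assms Q_nonneg[of p k] q_nonneg[of p k] by (simp_all add: a_def b_def)
  moreover have "q p k = a k * ((\<Sum>i\<in>I k. q p i * q p (k - i)) + b k)" if "k \<ge> 2" for k
    using q_fixed_point[OF assms(1,2) that] by (simp add: a_def b_def I_def add.assoc)
  moreover have "a k * ((\<Sum>i\<in>I k. q p i * v (k - i)) + b k) \<le> v k" if "k \<ge> K" for k
    using super that by (simp add: a_def b_def I_def add.assoc)
  ultimately show ?thesis
    by (intro dominated_by_supersolution[where K = "max K 2" and a = a and b = b and w = "q p" and I = I])
      (use v_pos in \<open>auto simp: I_def\<close>)
qed

lemma subsolution_dominated_by_q:
  assumes "0 < p" and "p < 1"
    and sub: "\<forall>k\<ge>K. u k \<le> 1 / (1 + (1 - p) / p * Q p k) * (\<Sum>i = 1..(k - 1) div 2. q p i * u (k - i))"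
  shows "\<exists>c>0. \<forall>k\<ge>1. c * u k \<le> q p k"
proof -
  define a where "a k = 1 / (1 + (1 - p) / p * Q p k)" for k
  define I where "I k = {1..(k - 1) div 2}" for k :: nat
  have "a k \<ge> 0" and "q p k \<ge> 0" for k
    using assms Q_nonneg[of p k] q_nonneg[of p k] by (simp_all add: a_def)
  moreover have "a k * ((\<Sum>i\<in>I k. q p i * q p (k - i)) + 0) \<le> q p k" if "k \<ge> 2" for k
  proof -
    have "0 \<le> a k * ((1 - p) / (2 * p) * (q p k)^2 + (if even k then 1/2 * (q p (k div 2))^2 else 0))"
      using assms \<open>a k \<ge> 0\<close> by simp
    then show ?thesis
      using q_fixed_point[OF assms(1,2) that] by (simp add: a_def I_def distrib_left add.assoc)
  qed
  moreover have "u k \<le> a k * ((\<Sum>i\<in>I k. q p i * u (k - i)) + 0)" if "k \<ge> K" for k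
    using sub that by (simp add: a_def I_def)
  ultimately have "\<exists>C>0. \<forall>k\<ge>1. u k \<le> C * q p k"
    by (intro dominated_by_supersolution[where K = "max K 2" and a = a and b = "\<lambda>_. 0" and w = "q p" and I = I])
      (use q_pos[OF assms(1,2)] in \<open>auto simp: I_def\<close>)
  then obtain C where "C > 0" and "\<forall>k\<ge>1. u k \<le> C * q p k" by blast
  then show ?thesis
    by (intro exI[of _ "1 / C"]) (auto simp: field_simps)
qed

theorem lemma8p2:
  fixes p :: real and qh :: "nat \<Rightarrow> real"
  assumes "0 < p" and "p < 1"
    and pos: "\<And>k. k \<ge> 1 \<Longrightarrow> qh k > 0"
  shows "((\<exists>K. \<forall>k\<ge>K. qh k \<ge> 1 / (1 + (1 - p) / p * Q p k) *
              ((\<Sum>i = 1..(k - 1) div 2. q p i * qh (k - i))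
               + (1 - p) / (2 * p) * (q p k)^2
               + (if even k then 1/2 * (q p (k div 2))^2 else 0)))
          \<longrightarrow> (\<exists>C>0. \<forall>k\<ge>1. q p k \<le> C * qh k))
       \<and> ((\<exists>K. \<forall>k\<ge>K. qh k \<le> 1 / (1 + (1 - p) / p * Q p k) *
              (\<Sum>i = 1..(k - 1) div 2. q p i * qh (k - i)))
          \<longrightarrow> (\<exists>c>0. \<forall>k\<ge>1. c * qh k \<le> q p k))"
  using q_dominated_by_supersolution[where v = qh, OF assms] subsolution_dominated_by_q[where u = qh, OF assms(1,2)]
  by blast

end
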